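(* $\mathrm{Prim}\,\mathcal Mag(2)=K\cdot[x_1,x_2]$. The space $\mathrm{Prim}\,\mathcal Mag(3)$ has dimension $8$ and is generated by the operations $(x_1,x_2,x_3)_b$ and $[[x_1,x_2],x_3]$, which satisfy $[[x_2,x_1],x_3]=-[[x_1,x_2],x_3]$ and the non-associative Jacobi relation $$[[x_1,x_2],x_3]+[[x_3,x_1],x_2]+[[x_2,x_3],x_1]=(x_1,x_2,x_3)_b-(x_2,x_1,x_3)_b+(x_3,x_1,x_2)_b-(x_1,x_3,x_2)_b+(x_2,x_3,x_1)_b-(x_3,x_2,x_1)_b.$$ Moreover, as a representation of $\Sigma_3$, $\mathrm{Prim}\,\mathcal Mag(3)\cong V_{(3)}\oplus3\,V_{(2,1)}\oplus V_{(1,1,1)}$.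
   Context: $K$ is a field of characteristic $0$. $K\{x_1,\dots,x_n\}$ is the free unitary magma algebra (non-associative, non-commutative, unit $1$, product $a\cdot b$) on $x_1,\dots,x_n$. The tensor square is a magma algebra componentwise, with $1\cdot a=a\cdot1=a$, and the co-addition $\Delta_a$ is the unital algebra homomorphism with $\Delta_a(x_i)=x_i\otimes1+1\otimes x_i$; $f$ is primitive if $\Delta_a(f)=f\otimes1+1\otimes f$. $\mathrm{Prim}\,\mathcal Mag(n)$ is the space of primitive elements multilinear of degree $n$ in $x_1,\dots,x_n$, with $\Sigma_n$ acting by permuting variables; "generated" refers to the $\Sigma_n$-action and linear combinations. Notation: $[a,b]=a\cdot b-b\cdot a$, $(a,b,c)_b=(a\cdot b)\cdot c-a\cdot(b\cdot c)$. $V_\lambda$ is the irreducible $\Sigma_3$-module for the partition $\lambda$ ($V_{(3)}$ trivial, $V_{(2,1)}$ two-dimensional, $V_{(1,1,1)}$ sign). *)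

theory Defs
  imports Complex_Main "HOL-Library.Function_Algebras" "HOL-Combinatorics.Permutations"
begin

text \<open>Non-associative, non-commutative monomials (binary trees, leaves = variables x_i).
  A basis word of the unitary magma is either the unit (None) or Some t.\<close>
datatype tree = Leaf nat | Node tree tree

type_synonym word = "tree option"

fun wmul :: "word \<Rightarrow> word \<Rightarrow> word" where
  "wmul None v = v"
| "wmul u None = u"
| "wmul (Some a) (Some b) = Some (Node a b)"

text \<open>Elements of K{x_1,...}: finitely supported coefficient functions on words
  (all elements used below have finite support). Addition is pointwise.\<close>
type_synonym 'a mag = "word \<Rightarrow> 'a"

definition mscale :: "'a::field \<Rightarrow> 'a mag \<Rightarrow> 'a mag" where
  "mscale c f = (\<lambda>w. c * f w)"

definition mmul :: "'a::field mag \<Rightarrow> 'a mag \<Rightarrow> 'a mag" where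
  "mmul f g = (\<lambda>w. \<Sum>(u,v)\<in>{(u,v). f u \<noteq> 0 \<and> g v \<noteq> 0 \<and> wmul u v = w}. f u * g v)"

definition var :: "nat \<Rightarrow> 'a::field mag" where
  "var i = (\<lambda>w. if w = Some (Leaf i) then 1 else 0)"

definition bracket :: "'a::field mag \<Rightarrow> 'a mag \<Rightarrow> 'a mag" where
  "bracket a b = mmul a b - mmul b a"

definition assoc_b :: "'a::field mag \<Rightarrow> 'a mag \<Rightarrow> 'a mag \<Rightarrow> 'a mag" where
  "assoc_b a b c = mmul (mmul a b) c - mmul a (mmul b c)"

type_synonym 'a ten = "word \<times> word \<Rightarrow> 'a"

fun pmul :: "word \<times> word \<Rightarrow> word \<times> word \<Rightarrow> word \<times> word" where
  "pmul (a1, a2) (b1, b2) = (wmul a1 b1, wmul a2 b2)"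

definition tmul :: "'a::field ten \<Rightarrow> 'a ten \<Rightarrow> 'a ten" where
  "tmul F G = (\<lambda>p. \<Sum>(a,b)\<in>{(a,b). F a \<noteq> 0 \<and> G b \<noteq> 0 \<and> pmul a b = p}. F a * G b)"

text \<open>Co-addition on basis monomials: the unital magma homomorphism with
  x_i \<mapsto> x_i \<otimes> 1 + 1 \<otimes> x_i.\<close>
fun deltaT :: "tree \<Rightarrow> 'a::field ten" where
  "deltaT (Leaf i) = (\<lambda>p. if p = (Some (Leaf i), None) \<or> p = (None, Some (Leaf i)) then 1 else 0)"
| "deltaT (Node a b) = tmul (deltaT a) (deltaT b)"

fun delta_w :: "word \<Rightarrow> 'a::field ten" where
  "delta_w None = (\<lambda>p. if p = (None, None) then 1 else 0)"
| "delta_w (Some t) = deltaT t"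

definition Delta :: "'a::field mag \<Rightarrow> 'a ten" where
  "Delta f = (\<lambda>p. \<Sum>w\<in>{w. f w \<noteq> 0}. f w * delta_w w p)"

definition primitive :: "'a::field mag \<Rightarrow> bool" where
  "primitive f \<longleftrightarrow>
     Delta f = (\<lambda>(u,v). (if v = None then f u else 0) + (if u = None then f v else 0))"

fun leaves :: "tree \<Rightarrow> nat list" where
  "leaves (Leaf i) = [i]"
| "leaves (Node a b) = leaves a @ leaves b"

definition multilin_word :: "nat \<Rightarrow> word \<Rightarrow> bool" where
  "multilin_word n w \<longleftrightarrow> (\<exists>t. w = Some t \<and> mset (leaves t) = mset [1..<n+1])"

definition Prim :: "nat \<Rightarrow> 'a::field mag set" where
  "Prim n = {f. (\<forall>w. f w \<noteq> 0 \<longrightarrow> multilin_word n w) \<and> primitive f}"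

fun relabel :: "(nat \<Rightarrow> nat) \<Rightarrow> tree \<Rightarrow> tree" where
  "relabel g (Leaf i) = Leaf (g i)"
| "relabel g (Node a b) = Node (relabel g a) (relabel g b)"

text \<open>Action of a permutation \<sigma>: substitute x_i \<mapsto> x_(\<sigma> i).\<close>
definition act :: "(nat \<Rightarrow> nat) \<Rightarrow> 'a mag \<Rightarrow> 'a mag" where
  "act \<sigma> f = (\<lambda>w. f (map_option (relabel (inv \<sigma>)) w))"

definition mspan :: "'a::field mag set \<Rightarrow> 'a mag set" where
  "mspan S = module.span mscale S"

definition mdim :: "'a::field mag set \<Rightarrow> nat" where
  "mdim S = vector_space.dim mscale S"

text \<open>V_(2,1): the standard representation {u \<in> K^3 | u_1+u_2+u_3 = 0}, coordinates indexed by 1,2,3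
  (functions nat \<Rightarrow> K vanishing outside {1,2,3}), with \<sigma> permuting coordinates.\<close>
definition V21 :: "(nat \<Rightarrow> 'a::field) set" where
  "V21 = {u. (\<forall>i. i \<notin> {1,2,3} \<longrightarrow> u i = 0) \<and> u 1 + u 2 + u 3 = 0}"

definition pact :: "(nat \<Rightarrow> nat) \<Rightarrow> (nat \<Rightarrow> 'a) \<Rightarrow> (nat \<Rightarrow> 'a)" where
  "pact \<sigma> u = (\<lambda>i. u (inv \<sigma> i))"

type_synonym 'a target = "'a \<times> (nat \<Rightarrow> 'a) \<times> (nat \<Rightarrow> 'a) \<times> (nat \<Rightarrow> 'a) \<times> 'a"

text \<open>First component: V_(3) (trivial); three copies of V_(2,1); last component: V_(1,1,1) (sign).\<close>
definition Target :: "'a::field target set" where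
  "Target = {(a, u1, u2, u3, s). u1 \<in> V21 \<and> u2 \<in> V21 \<and> u3 \<in> V21}"

definition tadd :: "'a::field target \<Rightarrow> 'a target \<Rightarrow> 'a target" where
  "tadd x y = (case x of (a, u1, u2, u3, s) \<Rightarrow> case y of (b, v1, v2, v3, r) \<Rightarrow>
      (a + b, u1 + v1, u2 + v2, u3 + v3, s + r))"

definition tscale :: "'a::field \<Rightarrow> 'a target \<Rightarrow> 'a target" where
  "tscale c x = (case x of (a, u1, u2, u3, s) \<Rightarrow>
      (c * a, (\<lambda>i. c * u1 i), (\<lambda>i. c * u2 i), (\<lambda>i. c * u3 i), c * s))"

definition tact :: "(nat \<Rightarrow> nat) \<Rightarrow> 'a::field target \<Rightarrow> 'a target" where
  "tact \<sigma> x = (case x of (a, u1, u2, u3, s) \<Rightarrow>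
      (a, pact \<sigma> u1, pact \<sigma> u2, pact \<sigma> u3, of_int (sign \<sigma>) * s))"

definition sigma3_iso :: "('a::field mag \<Rightarrow> 'a target) \<Rightarrow> bool" where
  "sigma3_iso \<phi> \<longleftrightarrow>
     bij_betw \<phi> (Prim 3) Target \<and>
     (\<forall>f\<in>Prim 3. \<forall>g\<in>Prim 3. \<phi> (f + g) = tadd (\<phi> f) (\<phi> g)) \<and>
     (\<forall>c. \<forall>f\<in>Prim 3. \<phi> (mscale c f) = tscale c (\<phi> f)) \<and>
     (\<forall>\<sigma>. \<sigma> permutes {1,2,3} \<longrightarrow> (\<forall>f\<in>Prim 3. \<phi> (act \<sigma> f) = tact \<sigma> (\<phi> f)))"

end

theory Submission
  imports Defs
begin

text \<open>
  A multilinear element of degree n lives on the finitely many words with n leaves, so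
  primitivity becomes a finite linear system in its coefficients.
  In degree 2 it just says f(x_1 x_2) = - f(x_2 x_1). In degree 3, writing
  s_abc = f((x_a x_b) x_c) + f(x_a (x_b x_c)), the coefficient of x_i \<otimes> x_j x_k in Delta f is
  s_ijk + s_jik + s_jki; these six equations leave the six left-normed coefficients free and a
  two-dimensional space of s's, so Prim(3) has dimension 8, with a basis of six associators
  and two double brackets.
  As a Sigma_3-module, the left-normed coefficients form the regular representation
  K[Sigma_3] = V_(3) \<oplus> 2 V_(2,1) \<oplus> V_(1,1,1), and the s's contribute a third copy of V_(2,1).
\<close>

section \<open>Finite linear combinations and convolution products\<close>

definition lincomb :: "('a::comm_monoid_add \<times> 'b) list \<Rightarrow> 'b \<Rightarrow> 'a" where
  "lincomb xs = (\<lambda>w. sum_list (map (\<lambda>(c,u). if u = w then c else 0) xs))"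

lemma lincomb_Nil [simp]: "lincomb [] = 0"
  by (simp add: lincomb_def fun_eq_iff)

lemma lincomb_append: "lincomb (xs @ ys) = lincomb xs + lincomb ys"
  by (simp add: lincomb_def fun_eq_iff)

lemma lincomb_Cons: "lincomb (p # xs) = lincomb [p] + lincomb xs"
  using lincomb_append[of "[p]" xs] by simp

lemma lincomb_nonzero_mem: "lincomb xs w \<noteq> 0 \<Longrightarrow> w \<in> snd ` set xs"
  by (induction xs) (auto simp: lincomb_def split: if_splits)

lemma finite_lincomb_support: "finite {w. lincomb xs w \<noteq> 0}"
  by (rule finite_subset[of _ "snd ` set xs"]) (auto dest: lincomb_nonzero_mem)

lemma lincomb_eq_iff:
  "lincomb xs = lincomb ys \<longleftrightarrow> (\<forall>w \<in> snd ` set xs \<union> snd ` set ys. lincomb xs w = lincomb ys w)"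
  by (metis UnCI ext lincomb_nonzero_mem)

lemma lincomb_map_apply:
  "lincomb (map (\<lambda>w. (g w, h w)) ws) q = sum_list (map (\<lambda>w. if h w = q then g w else 0) ws)"
  by (induction ws) (auto simp: lincomb_def)

lemma lincomb_coeffs_eq:
  assumes "distinct ws" "{w. f w \<noteq> 0} \<subseteq> set ws"
  shows "lincomb (map (\<lambda>w. (f w, w)) ws) = f"
proof
  fix w
  show "lincomb (map (\<lambda>w. (f w, w)) ws) w = f w"
    unfolding lincomb_map_apply sum_list_distinct_conv_sum_set[OF assms(1)]
    using assms(2) by auto
qed

definition terms_scale :: "'a::semiring_0 \<Rightarrow> ('a \<times> 'b) list \<Rightarrow> ('a \<times> 'b) list" where
  "terms_scale c xs = [(c * d, q). (d, q) \<leftarrow> xs]"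

lemma lincomb_terms_scale: "lincomb (terms_scale c xs) w = c * lincomb xs w"
  by (induction xs) (auto simp: terms_scale_def lincomb_def distrib_left)

lemma uminus_lincomb: "- lincomb xs = lincomb (terms_scale (-1) (xs :: ('a::ring_1 \<times> 'b) list))"
  by (rule ext) (simp add: lincomb_terms_scale)

lemma diff_lincomb:
  "lincomb xs - lincomb ys = lincomb (xs @ terms_scale (-1) (ys :: ('a::ring_1 \<times> 'b) list))"
  by (simp add: lincomb_append uminus_lincomb[symmetric])

definition conv_mul :: "('b \<Rightarrow> 'b \<Rightarrow> 'b) \<Rightarrow> ('b \<Rightarrow> 'a::semiring_0) \<Rightarrow> ('b \<Rightarrow> 'a) \<Rightarrow> 'b \<Rightarrow> 'a" where
  "conv_mul op F G = (\<lambda>x. \<Sum>(a,b)\<in>{(a,b). F a \<noteq> 0 \<and> G b \<noteq> 0 \<and> op a b = x}. F a * G b)"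

lemma conv_mul_eq_sum:
  assumes "finite A" "finite B" "\<And>a. F a \<noteq> 0 \<Longrightarrow> a \<in> A" "\<And>b. G b \<noteq> 0 \<Longrightarrow> b \<in> B"
  shows "conv_mul op F G x = (\<Sum>(a,b)\<in>A \<times> B. if op a b = x then F a * G b else 0)"
  unfolding conv_mul_def using assms
  by (intro sum.mono_neutral_cong_left) (auto split: if_splits)

lemma conv_mul_add_left:
  assumes "finite {a. F1 a \<noteq> 0}" "finite {a. F2 a \<noteq> 0}" "finite {b. G b \<noteq> 0}"
  shows "conv_mul op (F1 + F2) G = conv_mul op F1 G + conv_mul op F2 G"
proof
  fix x
  let ?A = "{a. F1 a \<noteq> 0} \<union> {a. F2 a \<noteq> 0}" and ?B = "{b. G b \<noteq> 0}"
  have fin: "finite ?A" "finite ?B" using assms by auto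
  show "conv_mul op (F1 + F2) G x = (conv_mul op F1 G + conv_mul op F2 G) x"
    unfolding plus_fun_apply
    by (subst (1 2 3) conv_mul_eq_sum[OF fin])
      (auto simp: sum.distrib[symmetric] distrib_right intro!: sum.cong)
qed

lemma conv_mul_add_right:
  assumes "finite {a. F a \<noteq> 0}" "finite {b. G1 b \<noteq> 0}" "finite {b. G2 b \<noteq> 0}"
  shows "conv_mul op F (G1 + G2) = conv_mul op F G1 + conv_mul op F G2"
proof
  fix x
  let ?A = "{a. F a \<noteq> 0}" and ?B = "{b. G1 b \<noteq> 0} \<union> {b. G2 b \<noteq> 0}"
  have fin: "finite ?A" "finite ?B" using assms by auto
  show "conv_mul op F (G1 + G2) x = (conv_mul op F G1 + conv_mul op F G2) x"
    unfolding plus_fun_apply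
    by (subst (1 2 3) conv_mul_eq_sum[OF fin])
      (auto simp: sum.distrib[symmetric] distrib_left intro!: sum.cong)
qed

lemma conv_mul_uminus_left: "conv_mul op (- F) G = - conv_mul op F (G :: 'b \<Rightarrow> 'a::ring)"
  by (simp add: conv_mul_def fun_eq_iff case_prod_unfold sum_negf)

lemma conv_mul_uminus_right: "conv_mul op F (- G) = - conv_mul op F (G :: 'b \<Rightarrow> 'a::ring)"
  by (simp add: conv_mul_def fun_eq_iff case_prod_unfold sum_negf)

lemma conv_mul_lincomb_singleton:
  "conv_mul op (lincomb [(c,u)]) (lincomb [(d,v)]) = lincomb [(c * d, op u v)]"
proof
  fix x
  show "conv_mul op (lincomb [(c,u)]) (lincomb [(d,v)]) x = lincomb [(c * d, op u v)] x"
    by (subst conv_mul_eq_sum[of "{u}" "{v}"]) (auto simp: lincomb_def split: if_splits)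
qed

definition terms_mul ::
  "('b \<Rightarrow> 'b \<Rightarrow> 'b) \<Rightarrow> ('a::semiring_0 \<times> 'b) list \<Rightarrow> ('a \<times> 'b) list \<Rightarrow> ('a \<times> 'b) list" where
  "terms_mul op xs ys = [(c * d, op u v). (c, u) \<leftarrow> xs, (d, v) \<leftarrow> ys]"

lemma terms_mul_append_left: "terms_mul op (xs @ xs') ys = terms_mul op xs ys @ terms_mul op xs' ys"
  by (simp add: terms_mul_def)

lemma terms_mul_append_right:
  "terms_mul op [p] (ys @ ys') = terms_mul op [p] ys @ terms_mul op [p] ys'"
  by (cases p) (simp add: terms_mul_def)

lemma conv_mul_lincomb_singleton_left:
  "conv_mul op (lincomb [p]) (lincomb ys) = lincomb (terms_mul op [p] ys)"
proof (induction ys)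
  case Nil
  then show ?case by (simp add: conv_mul_def terms_mul_def fun_eq_iff)
next
  case (Cons q ys)
  have "conv_mul op (lincomb [p]) (lincomb (q # ys))
      = conv_mul op (lincomb [p]) (lincomb [q]) + conv_mul op (lincomb [p]) (lincomb ys)"
    by (subst lincomb_Cons, rule conv_mul_add_right) (simp_all add: finite_lincomb_support)
  also have "\<dots> = lincomb (terms_mul op [p] [q]) + lincomb (terms_mul op [p] ys)"
    using Cons.IH by (cases p, cases q) (simp add: conv_mul_lincomb_singleton terms_mul_def)
  also have "\<dots> = lincomb (terms_mul op [p] (q # ys))"
    using terms_mul_append_right[of op p "[q]" ys] by (simp add: lincomb_append)
  finally show ?case .
qed

lemma conv_mul_lincomb:
  "conv_mul op (lincomb xs) (lincomb ys) = lincomb (terms_mul op xs ys)"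
proof (induction xs)
  case Nil
  then show ?case by (simp add: conv_mul_def terms_mul_def fun_eq_iff)
next
  case (Cons p xs)
  have "conv_mul op (lincomb (p # xs)) (lincomb ys)
      = conv_mul op (lincomb [p]) (lincomb ys) + conv_mul op (lincomb xs) (lincomb ys)"
    by (subst lincomb_Cons, rule conv_mul_add_left) (simp_all add: finite_lincomb_support)
  also have "\<dots> = lincomb (terms_mul op (p # xs) ys)"
    using terms_mul_append_left[of op "[p]" xs ys]
    by (simp add: Cons.IH conv_mul_lincomb_singleton_left lincomb_append)
  finally show ?case .
qed

lemma conv_mul_comp_bij_hom:
  assumes "bij r" and hom: "\<And>u v. r (op u v) = op (r u) (r v)"
  shows "conv_mul op (F \<circ> r) (G \<circ> r) = conv_mul op F G \<circ> r"
proof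
  fix x
  have inj: "inj (map_prod r r)"
    using bij_is_inj[OF assms(1)] unfolding inj_def by auto
  have "{(a, b). F a \<noteq> 0 \<and> G b \<noteq> 0 \<and> op a b = r x}
      = map_prod r r ` {(a, b). F (r a) \<noteq> 0 \<and> G (r b) \<noteq> 0 \<and> op a b = x}"
  proof safe
    fix a b assume ab: "F a \<noteq> 0" "G b \<noteq> 0" "op a b = r x"
    obtain a' b' where a'b': "a = r a'" "b = r b'"
      using bij_is_surj[OF assms(1)] by (metis surjD)
    with ab(3) have "r (op a' b') = r x" by (simp add: hom)
    with bij_is_inj[OF assms(1)] have "op a' b' = x" by (rule injD)
    with ab a'b' show "(a, b) \<in> map_prod r r ` {(a, b). F (r a) \<noteq> 0 \<and> G (r b) \<noteq> 0 \<and> op a b = x}"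
      by auto
  qed (auto simp: hom)
  then show "conv_mul op (F \<circ> r) (G \<circ> r) x = (conv_mul op F G \<circ> r) x"
    unfolding conv_mul_def comp_def
    by (intro sum.reindex_cong[OF inj_on_subset[OF inj], symmetric]) auto
qed

section \<open>The magma algebra and the action of permutations\<close>

lemma mmul_eq_conv_mul: "mmul = conv_mul wmul"
  by (simp add: fun_eq_iff mmul_def conv_mul_def)

lemma tmul_eq_conv_mul: "tmul = conv_mul pmul"
  by (simp add: fun_eq_iff tmul_def conv_mul_def)

lemma mscale_lincomb: "mscale c (lincomb xs) = lincomb (terms_scale c xs)"
  by (rule ext) (simp add: lincomb_terms_scale mscale_def)

lemma var_eq_lincomb: "var i = lincomb [(1, Some (Leaf i))]"
  by (rule ext) (simp add: var_def lincomb_def)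

lemma mmul_lincomb: "mmul (lincomb xs) (lincomb ys) = lincomb (terms_mul wmul xs ys)"
  by (simp add: mmul_eq_conv_mul conv_mul_lincomb)

lemma bracket_swap: "bracket g f = - bracket f g"
  by (simp add: bracket_def)

lemma bracket_uminus_left: "bracket (- f) g = - bracket f g"
  by (simp add: bracket_def mmul_eq_conv_mul conv_mul_uminus_left conv_mul_uminus_right)

interpretation mag: vector_space "mscale :: 'a::field \<Rightarrow> 'a mag \<Rightarrow> 'a mag"
  by unfold_locales (simp_all add: mscale_def fun_eq_iff algebra_simps)

lemma relabel_relabel: "relabel g (relabel h t) = relabel (g \<circ> h) t"
  by (induction t) auto

lemma relabel_id: "relabel id t = t"
  by (induction t) auto

lemma relabel_eq_Leaf_iff: "relabel g t = Leaf i \<longleftrightarrow> (\<exists>j. t = Leaf j \<and> g j = i)"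
  by (cases t) auto

lemma act_eq_comp: "act \<sigma> f = f \<circ> map_option (relabel (inv \<sigma>))"
  by (simp add: act_def fun_eq_iff)

lemma bij_map_option_relabel:
  assumes "bij g"
  shows "bij (map_option (relabel g))"
proof (rule o_bij)
  have inverse: "g \<circ> inv g = id" "inv g \<circ> g = id"
    using assms by (simp_all add: bij_is_inj bij_is_surj surj_iff[symmetric])
  then have relabel_inverse: "relabel g \<circ> relabel (inv g) = id" "relabel (inv g) \<circ> relabel g = id"
    unfolding fun_eq_iff comp_apply relabel_relabel inverse relabel_id by simp_all
  show "map_option (relabel g) \<circ> map_option (relabel (inv g)) = id"
    and "map_option (relabel (inv g)) \<circ> map_option (relabel g) = id"
    unfolding fun_eq_iff comp_apply option.map_comp relabel_inverse option.map_id by simp_all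
qed

lemma act_mmul:
  assumes "bij \<sigma>"
  shows "act \<sigma> (mmul f g) = mmul (act \<sigma> f) (act \<sigma> g)"
proof -
  let ?r = "map_option (relabel (inv \<sigma>))"
  have bij: "bij ?r"
    using assms by (simp add: bij_map_option_relabel bij_imp_bij_inv)
  have hom: "?r (wmul u v) = wmul (?r u) (?r v)" for u v
    by (cases u; cases v) simp_all
  show ?thesis
    unfolding act_eq_comp mmul_eq_conv_mul
    by (rule conv_mul_comp_bij_hom[where op = wmul, OF bij, symmetric]) (fact hom)
qed

lemma act_diff: "act \<sigma> (f - g) = act \<sigma> f - act \<sigma> g"
  by (simp add: act_def fun_eq_iff)

lemma act_var:
  assumes "bij \<sigma>"
  shows "act \<sigma> (var i) = var (\<sigma> i)"
proof -
  have "inv \<sigma> j = i \<longleftrightarrow> j = \<sigma> i" for j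
    using assms by (metis bij_inv_eq_iff)
  then show ?thesis
    by (auto simp: act_def var_def fun_eq_iff relabel_eq_Leaf_iff)
qed

lemma act_assoc_b: "bij \<sigma> \<Longrightarrow> act \<sigma> (assoc_b f g h) = assoc_b (act \<sigma> f) (act \<sigma> g) (act \<sigma> h)"
  by (simp add: assoc_b_def act_diff act_mmul)

lemma act_bracket: "bij \<sigma> \<Longrightarrow> act \<sigma> (bracket f g) = bracket (act \<sigma> f) (act \<sigma> g)"
  by (simp add: bracket_def act_diff act_mmul)

section \<open>Primitivity as a finite linear system\<close>

fun delta_terms :: "tree \<Rightarrow> ('a::field \<times> word \<times> word) list" where
  "delta_terms (Leaf i) = [(1, Some (Leaf i), None), (1, None, Some (Leaf i))]"
| "delta_terms (Node a b) = terms_mul pmul (delta_terms a) (delta_terms b)"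

lemma deltaT_eq_lincomb: "deltaT t = lincomb (delta_terms t)"
proof (induction t)
  case (Leaf i)
  then show ?case by (auto simp: lincomb_def fun_eq_iff)
next
  case (Node a b)
  then show ?case by (simp add: tmul_eq_conv_mul conv_mul_lincomb)
qed

fun delta_word_terms :: "word \<Rightarrow> ('a::field \<times> word \<times> word) list" where
  "delta_word_terms None = [(1, None, None)]"
| "delta_word_terms (Some t) = delta_terms t"

lemma delta_w_eq_lincomb: "delta_w w = lincomb (delta_word_terms w)"
  by (cases w) (auto simp: lincomb_def fun_eq_iff deltaT_eq_lincomb)

lemma Delta_eq_lincomb:
  assumes "distinct ws" and "{w. f w \<noteq> 0} \<subseteq> set ws"
  shows "Delta f = lincomb (concat [terms_scale (f w) (delta_word_terms w). w \<leftarrow> ws])"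
proof
  fix p
  have "Delta f p = (\<Sum>w\<in>set ws. f w * delta_w w p)"
    unfolding Delta_def by (rule sum.mono_neutral_left) (use assms(2) in auto)
  also have "\<dots> = sum_list [f w * delta_w w p. w \<leftarrow> ws]"
    using assms(1) by (simp add: sum_list_distinct_conv_sum_set)
  also have "\<dots> = lincomb (concat [terms_scale (f w) (delta_word_terms w). w \<leftarrow> ws]) p"
    by (induction ws) (simp_all add: lincomb_append lincomb_terms_scale delta_w_eq_lincomb)
  finally show "Delta f p = lincomb (concat [terms_scale (f w) (delta_word_terms w). w \<leftarrow> ws]) p" .
qed

lemma primitive_iff_lincomb:
  fixes f :: "'a::field mag"
  assumes "distinct ws" and "{w. f w \<noteq> 0} \<subseteq> set ws" and "None \<notin> set ws"
  shows "primitive f \<longleftrightarrow> lincomb (concat [terms_scale (f w) (delta_word_terms w). w \<leftarrow> ws])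
      = lincomb ([(f w, w, None). w \<leftarrow> ws] @ [(f w, None, w). w \<leftarrow> ws])"
proof -
  have coeff: "sum_list [if w = u then f w else 0. w \<leftarrow> ws] = f u" for u
    using assms(1,2) by (auto simp: sum_list_distinct_conv_sum_set)
  have "(\<lambda>(u,v). (if v = None then f u else 0) + (if u = None then f v else 0))
      = lincomb ([(f w, w, None). w \<leftarrow> ws] @ [(f w, None, w). w \<leftarrow> ws])"
    using assms(3) by (auto simp: fun_eq_iff lincomb_append lincomb_map_apply coeff)
  with Delta_eq_lincomb[OF assms(1,2)] show ?thesis
    unfolding primitive_def by simp
qed

abbreviation lword :: "nat \<Rightarrow> nat \<Rightarrow> nat \<Rightarrow> word" where
  "lword a b c \<equiv> Some (Node (Node (Leaf a) (Leaf b)) (Leaf c))"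

abbreviation rword :: "nat \<Rightarrow> nat \<Rightarrow> nat \<Rightarrow> word" where
  "rword a b c \<equiv> Some (Node (Leaf a) (Node (Leaf b) (Leaf c)))"

definition words2 :: "word list" where
  "words2 = [Some (Node (Leaf 1) (Leaf 2)), Some (Node (Leaf 2) (Leaf 1))]"

text \<open>Listed in the order in which permutes_123_eq enumerates the permutations of {1, 2, 3}.\<close>

definition perms3 :: "(nat \<times> nat \<times> nat) list" where
  "perms3 = [(1,2,3), (1,3,2), (2,1,3), (2,3,1), (3,2,1), (3,1,2)]"

definition words3 :: "word list" where
  "words3 = [lword a b c. (a,b,c) \<leftarrow> perms3] @ [rword a b c. (a,b,c) \<leftarrow> perms3]"

lemma distinct_words2: "distinct words2"
  by (simp add: words2_def)

lemma None_notin_words2: "None \<notin> set words2"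
  by (simp add: words2_def)

lemma distinct_words3: "distinct words3"
  by (simp add: words3_def perms3_def)

lemma None_notin_words3: "None \<notin> set words3"
  by (simp add: words3_def perms3_def)

lemma length_leaves_ge_1: "1 \<le> length (leaves t)"
  by (induction t) auto

lemma length_leaves_eq_1: "length (leaves t) = 1 \<Longrightarrow> \<exists>i. t = Leaf i"
proof (cases t)
  case (Node a b)
  moreover assume "length (leaves t) = 1"
  ultimately show ?thesis
    using length_leaves_ge_1[of a] length_leaves_ge_1[of b] by simp
qed simp

lemma length_leaves_eq_2: "length (leaves t) = 2 \<Longrightarrow> \<exists>i j. t = Node (Leaf i) (Leaf j)"
proof (cases t)
  case (Node a b)
  moreover assume "length (leaves t) = 2"
  ultimately have "length (leaves a) = 1" "length (leaves b) = 1"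
    using length_leaves_ge_1[of a] length_leaves_ge_1[of b] by simp_all
  with Node show ?thesis using length_leaves_eq_1[of a] length_leaves_eq_1[of b] by auto
qed simp

lemma length_leaves_eq_3:
  assumes "length (leaves t) = 3"
  shows "\<exists>i j k. t = Node (Node (Leaf i) (Leaf j)) (Leaf k)
    \<or> t = Node (Leaf i) (Node (Leaf j) (Leaf k))"
proof (cases t)
  case (Node a b)
  with assms have "length (leaves a) = 1 \<and> length (leaves b) = 2
      \<or> length (leaves a) = 2 \<and> length (leaves b) = 1"
    using length_leaves_ge_1[of a] length_leaves_ge_1[of b] by auto
  with Node show ?thesis
    using length_leaves_eq_1[of a] length_leaves_eq_1[of b]
      length_leaves_eq_2[of a] length_leaves_eq_2[of b]
    by auto
qed (use assms in simp)

lemma mset_eq_12_iff: "mset [i, j] = mset [1, 2::nat] \<longleftrightarrow> (i, j) \<in> {(1, 2), (2, 1)}"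
  by (auto simp: add_eq_conv_ex)

lemma mset_eq_123_iff: "mset [i, j, k] = mset [1, 2, 3::nat] \<longleftrightarrow> (i, j, k) \<in> set perms3"
  by (auto simp: perms3_def add_eq_conv_ex)

lemma multilin_word_2_iff: "multilin_word 2 w \<longleftrightarrow> w \<in> set words2"
proof
  assume "multilin_word 2 w"
  then obtain t where t: "w = Some t" "mset (leaves t) = mset [1, 2]"
    by (auto simp: multilin_word_def numeral_2_eq_2)
  then obtain i j where "t = Node (Leaf i) (Leaf j)"
    using length_leaves_eq_2 mset_eq_length by fastforce
  with t show "w \<in> set words2"
    using mset_eq_12_iff[of i j] by (auto simp: words2_def)
qed (auto simp: words2_def multilin_word_def numeral_2_eq_2 add_mset_commute)

lemma multilin_word_3_iff: "multilin_word 3 w \<longleftrightarrow> w \<in> set words3"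
proof
  assume "multilin_word 3 w"
  then obtain t where t: "w = Some t" "mset (leaves t) = mset [1, 2, 3]"
    by (auto simp: multilin_word_def numeral_3_eq_3)
  moreover have "length (leaves t) = 3"
    using mset_eq_length[OF t(2)] by simp
  ultimately obtain i j k
    where ijk: "t = Node (Node (Leaf i) (Leaf j)) (Leaf k)
      \<or> t = Node (Leaf i) (Node (Leaf j) (Leaf k))"
    using length_leaves_eq_3 by blast
  then have "(i, j, k) \<in> set perms3"
    using t(2) mset_eq_123_iff by auto
  with t(1) ijk show "w \<in> set words3"
    by (force simp: words3_def)
qed (auto simp: words3_def perms3_def multilin_word_def numeral_3_eq_3 add_mset_commute)

lemma primitive_words2_iff:
  assumes "{w. f w \<noteq> 0} \<subseteq> set words2"
  shows "primitive (f :: 'a::field mag)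
    \<longleftrightarrow> f (Some (Node (Leaf 1) (Leaf 2))) + f (Some (Node (Leaf 2) (Leaf 1))) = 0"
  unfolding primitive_iff_lincomb[OF distinct_words2 assms None_notin_words2] lincomb_eq_iff
  by (simp add: words2_def terms_scale_def terms_mul_def lincomb_def)

text \<open>The coefficient of x_i \<otimes> x_j x_k in Delta f.\<close>
definition delta_coeff3 :: "'a::field mag \<Rightarrow> nat \<Rightarrow> nat \<Rightarrow> nat \<Rightarrow> 'a" where
  "delta_coeff3 f i j k = f (lword i j k) + f (lword j i k) + f (lword j k i)
     + f (rword i j k) + f (rword j i k) + f (rword j k i)"

lemma primitive_words3_iff:
  assumes "{w. f w \<noteq> 0} \<subseteq> set words3"
  shows "primitive (f :: 'a::field mag)
    \<longleftrightarrow> (\<forall>i j k. (i, j, k) \<in> set perms3 \<longrightarrow> delta_coeff3 f i j k = 0)"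
  unfolding primitive_iff_lincomb[OF distinct_words3 assms None_notin_words3] lincomb_eq_iff
  by (simp add: words3_def perms3_def terms_scale_def terms_mul_def lincomb_def delta_coeff3_def
      add_ac) blast

lemma Prim2_iff:
  "(f :: 'a::field mag) \<in> Prim 2 \<longleftrightarrow> {w. f w \<noteq> 0} \<subseteq> set words2
     \<and> f (Some (Node (Leaf 1) (Leaf 2))) + f (Some (Node (Leaf 2) (Leaf 1))) = 0"
  unfolding Prim_def multilin_word_2_iff using primitive_words2_iff by blast

lemma Prim3_iff:
  "(f :: 'a::field mag) \<in> Prim 3 \<longleftrightarrow> {w. f w \<noteq> 0} \<subseteq> set words3
     \<and> (\<forall>i j k. (i, j, k) \<in> set perms3 \<longrightarrow> delta_coeff3 f i j k = 0)"
  unfolding Prim_def multilin_word_3_iff using primitive_words3_iff by blast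

lemma Prim2_eq: "(Prim 2 :: 'a::field mag set) = {mscale c (bracket (var 1) (var 2)) | c. True}"
proof -
  have bracket_12: "mscale c (bracket (var 1) (var 2))
      = lincomb [(c, Some (Node (Leaf 1) (Leaf 2))), (- c, Some (Node (Leaf 2) (Leaf 1)))]"
    for c :: 'a
    unfolding bracket_def var_eq_lincomb mmul_lincomb diff_lincomb mscale_lincomb lincomb_eq_iff
    by (simp add: terms_scale_def terms_mul_def lincomb_def)
  have "f \<in> Prim 2 \<longleftrightarrow> (\<exists>c. f = mscale c (bracket (var 1) (var 2)))" for f :: "'a mag"
  proof
    assume "f \<in> Prim 2"
    then have supp: "{w. f w \<noteq> 0} \<subseteq> set words2"
      and antisym: "f (Some (Node (Leaf 2) (Leaf 1))) = - f (Some (Node (Leaf 1) (Leaf 2)))"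
      by (auto simp: Prim2_iff eq_neg_iff_add_eq_0 add.commute)
    have "f = lincomb [(f w, w). w \<leftarrow> words2]"
      using lincomb_coeffs_eq[OF distinct_words2 supp] by simp
    also have "\<dots> = mscale (f (Some (Node (Leaf 1) (Leaf 2)))) (bracket (var 1) (var 2))"
      unfolding bracket_12 using antisym by (simp add: words2_def)
    finally show "\<exists>c. f = mscale c (bracket (var 1) (var 2))" ..
  next
    assume "\<exists>c. f = mscale c (bracket (var 1) (var 2))"
    then obtain c where "f = mscale c (bracket (var 1) (var 2))" ..
    then show "f \<in> Prim 2"
      unfolding bracket_12 by (auto simp: Prim2_iff words2_def lincomb_def)
  qed
  then show ?thesis by blast
qed

section \<open>A basis of Prim(3)\<close>

lemma permutes_123_decompose:
  assumes \<sigma>: "\<sigma> permutes {1, 2, 3::nat}"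
  obtains b c where "b \<in> {1, 2, 3}" "c \<in> {2, 3}" "\<sigma> = transpose 1 b \<circ> transpose 2 c"
proof
  define b where "b = \<sigma> 1"
  define \<tau> where "\<tau> = transpose 1 b \<circ> \<sigma>"
  have \<tau>: "\<tau> permutes {2, 3}"
    unfolding \<tau>_def b_def by (rule permutes_insert_lemma[OF \<sigma>])
  define c where "c = \<tau> 2"
  have "transpose 2 c \<circ> \<tau> permutes {3}"
    unfolding c_def by (rule permutes_insert_lemma[OF \<tau>])
  then have \<tau>_inverse: "transpose 2 c \<circ> \<tau> = id"
    by (simp only: permutes_sing)
  have "\<sigma> = transpose 1 b \<circ> (transpose 2 c \<circ> (transpose 2 c \<circ> \<tau>))"
    unfolding \<tau>_def by (simp add: fun_eq_iff)
  then show "\<sigma> = transpose 1 b \<circ> transpose 2 c"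
    unfolding \<tau>_inverse by simp
  show "b \<in> {1, 2, 3}" "c \<in> {2, 3}"
    unfolding b_def c_def using permutes_in_image[OF \<sigma>] permutes_in_image[OF \<tau>] by simp_all
qed

lemma permutes_123_eq:
  "{\<sigma>. \<sigma> permutes {1, 2, 3::nat}} = (\<lambda>(b, c). transpose 1 b \<circ> transpose 2 c) ` ({1, 2, 3} \<times> {2, 3})"
proof (intro set_eqI iffI)
  fix \<sigma> assume "\<sigma> \<in> {\<sigma>. \<sigma> permutes {1, 2, 3::nat}}"
  then have "\<sigma> permutes {1, 2, 3}" by simp
  then obtain b c where "b \<in> {1, 2, 3}" "c \<in> {2, 3}" "\<sigma> = transpose 1 b \<circ> transpose 2 c"
    by (rule permutes_123_decompose)
  then show "\<sigma> \<in> (\<lambda>(b, c). transpose 1 b \<circ> transpose 2 c) ` ({1, 2, 3} \<times> {2, 3})"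
    by (intro image_eqI[where x = "(b, c)"] SigmaI) simp_all
next
  fix \<sigma> assume "\<sigma> \<in> (\<lambda>(b, c). transpose 1 b \<circ> transpose 2 c) ` ({1, 2, 3::nat} \<times> {2, 3})"
  then show "\<sigma> \<in> {\<sigma>. \<sigma> permutes {1, 2, 3}}"
    by (elim imageE SigmaE) (simp add: permutes_compose permutes_swap_id)
qed

lemma Setcompr_permutes_123:
  assumes "\<And>\<sigma>. \<sigma> permutes {1, 2, 3} \<Longrightarrow> G \<sigma> = F (\<sigma> 1) (\<sigma> 2) (\<sigma> 3)"
  shows "{G \<sigma> | \<sigma>. \<sigma> permutes {1, 2, 3::nat}} = (\<lambda>(a, b, c). F a b c) ` set perms3"
proof -
  have "{G \<sigma> | \<sigma>. \<sigma> permutes {1, 2, 3::nat}}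
      = (\<lambda>\<sigma>. F (\<sigma> 1) (\<sigma> 2) (\<sigma> 3)) ` {\<sigma>. \<sigma> permutes {1, 2, 3::nat}}"
    using assms by force
  then show ?thesis
    unfolding permutes_123_eq image_image by (simp add: perms3_def)
qed

lemma assoc_b_var_eq_lincomb:
  "assoc_b (var a) (var b) (var c)
     = lincomb [(1, lword a b c), (-1, rword a b c) :: 'a::field \<times> word]"
  unfolding assoc_b_def var_eq_lincomb mmul_lincomb diff_lincomb
  by (simp add: terms_scale_def terms_mul_def)

lemma bracket_bracket_var_eq_lincomb:
  "bracket (bracket (var a) (var b)) (var c)
     = lincomb [(1, lword a b c), (-1, lword b a c), (-1, rword c a b), (1, rword c b a)
         :: 'a::field \<times> word]"
  unfolding bracket_def var_eq_lincomb mmul_lincomb diff_lincomb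
  by (simp add: terms_scale_def terms_mul_def)

lemma nonassociative_Jacobi_var:
  "bracket (bracket (var 1) (var 2)) (var 3) + bracket (bracket (var 3) (var 1)) (var 2)
     + bracket (bracket (var 2) (var 3)) (var 1)
   = assoc_b (var 1) (var 2) (var 3) - assoc_b (var 2) (var 1) (var 3)
     + assoc_b (var 3) (var 1) (var 2) - assoc_b (var 1) (var 3) (var 2)
     + assoc_b (var 2) (var 3) (var 1) - (assoc_b (var 3) (var 2) (var 1) :: 'a::field mag)"
  unfolding assoc_b_var_eq_lincomb bracket_bracket_var_eq_lincomb diff_lincomb
    lincomb_append[symmetric] lincomb_eq_iff
  by (simp add: terms_scale_def lincomb_def)

lemma orbit_assoc_b_123:
  "{act \<sigma> (assoc_b (var 1) (var 2) (var 3)) | \<sigma>. \<sigma> permutes {1, 2, 3}}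
     = (\<lambda>(a, b, c). assoc_b (var a) (var b) (var c) :: 'a::field mag) ` set perms3"
  by (rule Setcompr_permutes_123) (simp add: act_assoc_b act_var permutes_bij)

lemma orbit_bracket_bracket_123:
  "{act \<sigma> (bracket (bracket (var 1) (var 2)) (var 3)) | \<sigma>. \<sigma> permutes {1, 2, 3}}
     = (\<lambda>(a, b, c). bracket (bracket (var a) (var b)) (var c) :: 'a::field mag) ` set perms3"
  by (rule Setcompr_permutes_123) (simp add: act_bracket act_var permutes_bij)

lemma delta_coeff3_add: "delta_coeff3 (f + g) i j k = delta_coeff3 f i j k + delta_coeff3 g i j k"
  by (simp add: delta_coeff3_def algebra_simps)

lemma delta_coeff3_mscale: "delta_coeff3 (mscale c f) i j k = c * delta_coeff3 f i j k"
  by (simp add: delta_coeff3_def mscale_def algebra_simps)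

lemma subspace_Prim3: "mag.subspace (Prim 3 :: 'a::field mag set)"
proof (rule mag.subspaceI)
  show "0 \<in> (Prim 3 :: 'a mag set)"
    by (simp add: Prim3_iff delta_coeff3_def)
next
  fix f g :: "'a mag"
  assume "f \<in> Prim 3" "g \<in> Prim 3"
  moreover have "{w. (f + g) w \<noteq> 0} \<subseteq> {w. f w \<noteq> 0} \<union> {w. g w \<noteq> 0}"
    by auto
  ultimately show "f + g \<in> Prim 3"
    unfolding Prim3_iff delta_coeff3_add by auto
next
  fix c :: 'a and f :: "'a mag"
  assume "f \<in> Prim 3"
  moreover have "{w. mscale c f w \<noteq> 0} \<subseteq> {w. f w \<noteq> 0}"
    by (auto simp: mscale_def)
  ultimately show "mscale c f \<in> Prim 3"
    unfolding Prim3_iff delta_coeff3_mscale by auto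
qed

lemma lincomb_in_Prim3:
  assumes "snd ` set xs \<subseteq> set words3"
    and "\<forall>i j k. (i, j, k) \<in> set perms3 \<longrightarrow> delta_coeff3 (lincomb xs) i j k = 0"
  shows "lincomb xs \<in> Prim 3"
proof -
  have "{w. lincomb xs w \<noteq> 0} \<subseteq> set words3"
    using assms(1) lincomb_nonzero_mem by fastforce
  with assms(2) show ?thesis
    unfolding Prim3_iff by simp
qed

lemma assoc_b_var_in_Prim3:
  assumes "(a, b, c) \<in> set perms3"
  shows "(assoc_b (var a) (var b) (var c) :: 'a::field mag) \<in> Prim 3"
  using assms unfolding assoc_b_var_eq_lincomb
  by (intro lincomb_in_Prim3; simp add: perms3_def; elim disjE conjE)
    (simp_all add: words3_def perms3_def delta_coeff3_def lincomb_def)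

lemma bracket_bracket_var_in_Prim3:
  assumes "(a, b, c) \<in> set perms3"
  shows "(bracket (bracket (var a) (var b)) (var c) :: 'a::field mag) \<in> Prim 3"
  using assms unfolding bracket_bracket_var_eq_lincomb
  by (intro lincomb_in_Prim3; simp add: perms3_def; elim disjE conjE)
    (simp_all add: words3_def perms3_def delta_coeff3_def lincomb_def)

text \<open>With s_abc = f (lword a b c) + f (rword a b c), primitivity says s_ijk + s_jik + s_jki = 0;
  hence s_231 = s_132, s_312 = s_213, s_321 = s_123 and s_123 + s_132 + s_213 = 0.\<close>

lemma Prim3_rword_coeffs:
  assumes "f \<in> Prim 3"
  shows "f (rword 2 1 3)
      = - f (lword 2 1 3) - (f (lword 1 2 3) + f (rword 1 2 3))
        - (f (lword 1 3 2) + f (rword 1 3 2))"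
      (is ?c213)
    and "f (rword 2 3 1) = f (lword 1 3 2) + f (rword 1 3 2) - f (lword 2 3 1)" (is ?c231)
    and "f (rword 3 1 2)
      = - f (lword 3 1 2) - (f (lword 1 2 3) + f (rword 1 2 3))
        - (f (lword 1 3 2) + f (rword 1 3 2))"
      (is ?c312)
    and "f (rword 3 2 1) = f (lword 1 2 3) + f (rword 1 2 3) - f (lword 3 2 1)" (is ?c321)
proof -
  have "delta_coeff3 f i j k = 0" if "(i, j, k) \<in> set perms3" for i j k
    using assms that by (simp add: Prim3_iff)
  then have "delta_coeff3 f 1 2 3 = 0" "delta_coeff3 f 2 1 3 = 0" "delta_coeff3 f 3 1 2 = 0"
    "delta_coeff3 f 3 2 1 = 0"
    by (simp_all add: perms3_def)
  then show ?c213 and ?c231 and ?c312 and ?c321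
    unfolding delta_coeff3_def by algebra+
qed

definition Prim3_basis :: "'a::field mag list" where
  "Prim3_basis = [assoc_b (var a) (var b) (var c). (a, b, c) \<leftarrow> perms3]
     @ [bracket (bracket (var 1) (var 2)) (var 3), bracket (bracket (var 1) (var 3)) (var 2)]"

lemma Prim3_basis_subset: "set Prim3_basis \<subseteq> (Prim 3 :: 'a::field mag set)"
proof -
  have "(1, 2, 3) \<in> set perms3" "(1, 3, 2) \<in> set perms3"
    by (simp_all add: perms3_def)
  then show ?thesis
    using assoc_b_var_in_Prim3 bracket_bracket_var_in_Prim3 by (auto simp: Prim3_basis_def)
qed

lemma Prim3_subset_span_basis: "(Prim 3 :: 'a::field mag set) \<subseteq> mag.span (set Prim3_basis)"
proof
  fix f :: "'a mag"
  assume f: "f \<in> Prim 3"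
  define A :: "nat \<Rightarrow> nat \<Rightarrow> nat \<Rightarrow> 'a mag"
    where "A a b c = assoc_b (var a) (var b) (var c)" for a b c
  define K :: "nat \<Rightarrow> nat \<Rightarrow> nat \<Rightarrow> 'a mag"
    where "K a b c = bracket (bracket (var a) (var b)) (var c)" for a b c
  define s where "s a b c = f (lword a b c) + f (rword a b c)" for a b c
  have "{w. f w \<noteq> 0} \<subseteq> set words3"
    using f by (simp add: Prim3_iff)
  then have "f = lincomb [(f w, w). w \<leftarrow> words3]"
    by (rule lincomb_coeffs_eq[OF distinct_words3, symmetric])
  \<comment> \<open>the coefficients match f on the left-normed words, hence on all words by Prim3_rword_coeffs\<close>
  also have "\<dots> = mscale (- f (rword 1 2 3)) (A 1 2 3) + mscale (- f (rword 1 3 2)) (A 1 3 2)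
      + mscale (f (lword 2 1 3) + s 1 2 3) (A 2 1 3) + mscale (f (lword 2 3 1)) (A 2 3 1)
      + mscale (f (lword 3 2 1)) (A 3 2 1) + mscale (f (lword 3 1 2) + s 1 3 2) (A 3 1 2)
      + mscale (s 1 2 3) (K 1 2 3) + mscale (s 1 3 2) (K 1 3 2)"
    unfolding A_def K_def s_def assoc_b_var_eq_lincomb bracket_bracket_var_eq_lincomb mscale_lincomb
      lincomb_append[symmetric] lincomb_eq_iff
    by (simp add: words3_def perms3_def lincomb_def terms_scale_def algebra_simps
        Prim3_rword_coeffs[OF f, unfolded One_nat_def])
  also have "\<dots> \<in> mag.span (set Prim3_basis)"
    unfolding A_def K_def
    by (intro mag.span_add mag.span_scale mag.span_base) (simp_all add: Prim3_basis_def perms3_def)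
  finally show "f \<in> mag.span (set Prim3_basis)" .
qed

lemma distinct_Prim3_basis: "distinct (Prim3_basis :: 'a::field mag list)"
proof -
  have "distinct (map (\<lambda>v. map v words3) (Prim3_basis :: 'a mag list))"
    by (simp add: Prim3_basis_def perms3_def words3_def assoc_b_var_eq_lincomb
        bracket_bracket_var_eq_lincomb lincomb_def)
  then show ?thesis
    by (simp add: distinct_map)
qed

lemma independent_Prim3_basis: "mag.independent (set (Prim3_basis :: 'a::field mag list))"
proof (rule mag.independent_if_scalars_zero)
  fix c :: "'a mag \<Rightarrow> 'a" and v :: "'a mag"
  assume "(\<Sum>v\<in>set Prim3_basis. mscale (c v) v) = 0" and v: "v \<in> set Prim3_basis"
  then have "sum_list [mscale (c v) v. v \<leftarrow> Prim3_basis] w = 0" for w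
    by (simp add: sum_list_distinct_conv_sum_set[OF distinct_Prim3_basis])
  from this[of "lword 1 2 3"] this[of "lword 1 3 2"] this[of "lword 2 1 3"] this[of "lword 2 3 1"]
    this[of "lword 3 1 2"] this[of "lword 3 2 1"] this[of "rword 1 2 3"] this[of "rword 1 3 2"]
  show "c v = 0"
    using v by (auto simp: Prim3_basis_def perms3_def assoc_b_var_eq_lincomb
        bracket_bracket_var_eq_lincomb lincomb_def mscale_def)
qed simp

lemma dim_Prim3: "mag.dim (Prim 3 :: 'a::field mag set) = 8"
proof (rule mag.dim_unique[OF Prim3_basis_subset Prim3_subset_span_basis independent_Prim3_basis])
  show "card (set (Prim3_basis :: 'a mag list)) = 8"
    unfolding distinct_card[OF distinct_Prim3_basis] by (simp add: Prim3_basis_def perms3_def)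
qed

lemma Prim3_eq_span_generators:
  "(Prim 3 :: 'a::field mag set)
     = mag.span ((\<lambda>(a, b, c). assoc_b (var a) (var b) (var c)) ` set perms3
         \<union> (\<lambda>(a, b, c). bracket (bracket (var a) (var b)) (var c)) ` set perms3)"
  (is "_ = mag.span ?G")
proof (rule mag.span_subspace[symmetric])
  show "?G \<subseteq> Prim 3"
    using assoc_b_var_in_Prim3 bracket_bracket_var_in_Prim3 by auto
  have "set Prim3_basis \<subseteq> ?G"
    by (auto simp: Prim3_basis_def perms3_def)
  then show "Prim 3 \<subseteq> mag.span ?G"
    using Prim3_subset_span_basis mag.span_mono by blast
qed (rule subspace_Prim3)

section \<open>Prim(3) as a representation of Sigma_3\<close>

definition vec3 :: "'a::zero \<Rightarrow> 'a \<Rightarrow> 'a \<Rightarrow> nat \<Rightarrow> 'a" where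
  "vec3 x y z = (\<lambda>i. if i = 1 then x else if i = 2 then y else if i = 3 then z else 0)"

text \<open>Stated at Suc 0, the simp normal form of the index 1.\<close>

lemma vec3_apply [simp]: "vec3 x y z (Suc 0) = x" "vec3 x y z 2 = y" "vec3 x y z 3 = z"
  by (simp_all add: vec3_def)

lemma vec3_eq_iff [simp]: "vec3 x y z = vec3 x' y' z' \<longleftrightarrow> x = x' \<and> y = y' \<and> z = z'"
  by (metis vec3_apply)

lemma pact_vec3:
  assumes "\<sigma> permutes {1, 2, 3}"
  shows "pact \<sigma> (vec3 x y z)
    = vec3 (vec3 x y z (inv \<sigma> 1)) (vec3 x y z (inv \<sigma> 2)) (vec3 x y z (inv \<sigma> 3))"
proof
  fix i :: nat
  have "inv \<sigma> permutes {1, 2, 3}"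
    using assms by (rule permutes_inv)
  then show "pact \<sigma> (vec3 x y z) i
      = vec3 (vec3 x y z (inv \<sigma> 1)) (vec3 x y z (inv \<sigma> 2)) (vec3 x y z (inv \<sigma> 3)) i"
    by (cases "i \<in> {1, 2, 3}") (auto simp: pact_def vec3_def permutes_not_in)
qed

lemma V21_iff: "u \<in> V21 \<longleftrightarrow> (\<exists>x y. u = vec3 x y (- x - y))"
proof
  assume "u \<in> V21"
  then have "u = vec3 (u 1) (u 2) (- u 1 - u 2)"
    by (auto simp: V21_def vec3_def fun_eq_iff eq_neg_iff_add_eq_0 algebra_simps)
  then show "\<exists>x y. u = vec3 x y (- x - y)" by blast
qed (auto simp: V21_def vec3_def)

text \<open>The left-normed coefficients of f span a copy of the regular representation K[Sigma_3]:
  triv_coord and sign_coord are its trivial and sign components, and grouping the left-normed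
  words by their first resp. middle letter gives its two copies of V_(2,1). The third copy,
  first_coord, groups the sums s_abc = f (lword a b c) + f (rword a b c) by first letter.\<close>

definition triv_coord :: "'a::field mag \<Rightarrow> 'a" where
  "triv_coord f = f (lword 1 2 3) + f (lword 1 3 2) + f (lword 2 1 3)
     + f (lword 2 3 1) + f (lword 3 1 2) + f (lword 3 2 1)"

definition sign_coord :: "'a::field mag \<Rightarrow> 'a" where
  "sign_coord f = f (lword 1 2 3) - f (lword 1 3 2) - f (lword 2 1 3)
     + f (lword 2 3 1) + f (lword 3 1 2) - f (lword 3 2 1)"

definition lfirst_coord :: "'a::field mag \<Rightarrow> nat \<Rightarrow> 'a" where
  "lfirst_coord f = vec3 (3 * (f (lword 1 2 3) + f (lword 1 3 2)) - triv_coord f)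
     (3 * (f (lword 2 1 3) + f (lword 2 3 1)) - triv_coord f)
     (3 * (f (lword 3 1 2) + f (lword 3 2 1)) - triv_coord f)"

definition lmiddle_coord :: "'a::field mag \<Rightarrow> nat \<Rightarrow> 'a" where
  "lmiddle_coord f = vec3 (3 * (f (lword 2 1 3) + f (lword 3 1 2)) - triv_coord f)
     (3 * (f (lword 1 2 3) + f (lword 3 2 1)) - triv_coord f)
     (3 * (f (lword 1 3 2) + f (lword 2 3 1)) - triv_coord f)"

definition first_coord :: "'a::field mag \<Rightarrow> nat \<Rightarrow> 'a" where
  "first_coord f = vec3 (f (lword 1 2 3) + f (rword 1 2 3) + f (lword 1 3 2) + f (rword 1 3 2))
     (f (lword 2 1 3) + f (rword 2 1 3) + f (lword 2 3 1) + f (rword 2 3 1))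
     (f (lword 3 1 2) + f (rword 3 1 2) + f (lword 3 2 1) + f (rword 3 2 1))"

definition Prim3_coords :: "'a::field mag \<Rightarrow> 'a target" where
  "Prim3_coords f = (triv_coord f, lfirst_coord f, lmiddle_coord f, first_coord f, sign_coord f)"

text \<open>The p_abc are the left-normed coefficients, recovered from triv_coord, sign_coord,
  lfirst_coord and lmiddle_coord. The right-normed coefficients are s_abc - p_abc, where
  (s_123, s_132, s_213) = (-y, x + y, -x) is read off first_coord and the other s_abc follow
  from the relations of Prim3_rword_coeffs.\<close>

definition Prim3_of_coords :: "'a::field target \<Rightarrow> 'a mag" where
  "Prim3_of_coords = (\<lambda>(T, u1, u2, u3, sg).
     let a = u1 1; b = u1 2; c = u2 1; d = u2 2; x = u3 1; y = u3 2;
       p123 = (3*T + 4*a + 2*b + 2*c + 4*d + 3*sg) / 18;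
       p132 = (3*T + 2*a - 2*b - 2*c - 4*d - 3*sg) / 18;
       p213 = (3*T + 2*a + 4*b + 4*c + 2*d - 3*sg) / 18;
       p231 = (3*T - 2*a + 2*b - 4*c - 2*d + 3*sg) / 18;
       p312 = (3*T - 2*a - 4*b + 2*c - 2*d + 3*sg) / 18;
       p321 = (3*T - 4*a - 2*b - 2*c + 2*d - 3*sg) / 18
     in lincomb [(p123, lword 1 2 3), (p132, lword 1 3 2), (p213, lword 2 1 3),
       (p231, lword 2 3 1), (p312, lword 3 1 2), (p321, lword 3 2 1),
       (- y - p123, rword 1 2 3), (x + y - p132, rword 1 3 2), (- x - p213, rword 2 1 3),
       (x + y - p231, rword 2 3 1), (- x - p312, rword 3 1 2), (- y - p321, rword 3 2 1)])"

lemma Prim3_coords_add: "Prim3_coords (f + g) = tadd (Prim3_coords f) (Prim3_coords g)"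
  by (simp add: Prim3_coords_def tadd_def triv_coord_def sign_coord_def lfirst_coord_def
      lmiddle_coord_def first_coord_def vec3_def fun_eq_iff algebra_simps)

lemma Prim3_coords_mscale: "Prim3_coords (mscale c f) = tscale c (Prim3_coords f)"
  by (simp add: Prim3_coords_def tscale_def mscale_def triv_coord_def sign_coord_def
      lfirst_coord_def lmiddle_coord_def first_coord_def vec3_def fun_eq_iff algebra_simps)

lemma Prim3_coords_in_Target: "f \<in> Prim 3 \<Longrightarrow> Prim3_coords f \<in> Target"
  using Prim3_rword_coeffs[of f]
  by (simp add: Prim3_coords_def Target_def V21_def triv_coord_def lfirst_coord_def
      lmiddle_coord_def first_coord_def vec3_def)

lemma Prim3_of_coords_in_Prim3: "(Prim3_of_coords t :: 'a::field mag) \<in> Prim 3"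
  unfolding Prim3_of_coords_def Let_def
  by (cases t, simp, rule lincomb_in_Prim3)
    (auto simp: words3_def perms3_def delta_coeff3_def lincomb_def)

lemma Prim3_of_coords_Prim3_coords:
  assumes f: "(f :: 'a::field_char_0 mag) \<in> Prim 3"
  shows "Prim3_of_coords (Prim3_coords f) = f"
proof -
  have "{w. f w \<noteq> 0} \<subseteq> set words3"
    using f by (simp add: Prim3_iff)
  then have "f = lincomb [(f w, w). w \<leftarrow> words3]"
    by (rule lincomb_coeffs_eq[OF distinct_words3, symmetric])
  also have "\<dots> = Prim3_of_coords (Prim3_coords f)"
    unfolding Prim3_of_coords_def Prim3_coords_def Let_def prod.case lincomb_eq_iff
    by (simp add: words3_def perms3_def lincomb_def triv_coord_def sign_coord_def lfirst_coord_def
        lmiddle_coord_def first_coord_def vec3_def Prim3_rword_coeffs[OF f, unfolded One_nat_def])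
  finally show ?thesis ..
qed

lemma Prim3_coords_Prim3_of_coords:
  assumes "(t :: 'a::field_char_0 target) \<in> Target"
  shows "Prim3_coords (Prim3_of_coords t) = t"
proof -
  obtain T u1 u2 u3 sg where t: "t = (T, u1, u2, u3, sg)"
    by (cases t)
  with assms obtain x1 y1 x2 y2 x3 y3
    where "u1 = vec3 x1 y1 (- x1 - y1)" "u2 = vec3 x2 y2 (- x2 - y2)" "u3 = vec3 x3 y3 (- x3 - y3)"
    by (auto simp: Target_def V21_iff)
  then show ?thesis
    unfolding t Prim3_of_coords_def Prim3_coords_def Let_def prod.case
    by (simp add: lincomb_def triv_coord_def sign_coord_def lfirst_coord_def lmiddle_coord_def
        first_coord_def vec3_def fun_eq_iff field_simps)
qed

lemma Prim3_coords_act: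
  assumes "\<sigma> permutes {1, 2, 3}"
  shows "Prim3_coords (act \<sigma> f) = tact \<sigma> (Prim3_coords (f :: 'a::field mag))"
proof -
  obtain b c where bc: "b \<in> {1, 2, 3}" "c \<in> {2, 3}" and \<sigma>: "\<sigma> = transpose 1 b \<circ> transpose 2 c"
    using assms by (rule permutes_123_decompose)
  have "inv \<sigma> = transpose 2 c \<circ> transpose 1 b"
    unfolding \<sigma> by (simp add: o_inv_distrib)
  moreover have "sign \<sigma> = sign (transpose 1 b) * sign (transpose 2 c)"
    unfolding \<sigma> by (simp add: sign_compose permutation_swap_id)
  moreover have "act \<sigma> f (Some t) = f (Some (relabel (inv \<sigma>) t))" for t
    by (simp add: act_def)
  ultimately show ?thesis
    using bc unfolding Prim3_coords_def tact_def lfirst_coord_def lmiddle_coord_def first_coord_def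
    by (simp add: pact_vec3[OF assms], elim disjE;
        simp add: triv_coord_def sign_coord_def sign_swap_id algebra_simps)
qed

lemma sigma3_iso_Prim3_coords: "sigma3_iso (Prim3_coords :: 'a::field_char_0 mag \<Rightarrow> 'a target)"
  unfolding sigma3_iso_def
proof (intro conjI ballI allI impI)
  show "bij_betw Prim3_coords (Prim 3 :: 'a mag set) Target"
    by (rule bij_betw_byWitness[where f' = Prim3_of_coords])
      (auto simp: Prim3_of_coords_Prim3_coords Prim3_coords_Prim3_of_coords Prim3_coords_in_Target
        Prim3_of_coords_in_Prim3)
qed (simp_all add: Prim3_coords_add Prim3_coords_mscale Prim3_coords_act)

theorem proposition4p5p6:
  defines "x \<equiv> (var :: nat \<Rightarrow> 'a::field_char_0 mag)"
  shows "(Prim 2 :: 'a mag set) = {mscale c (bracket (x 1) (x 2)) | c. True}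
    \<and> mdim (Prim 3 :: 'a mag set) = 8
    \<and> (Prim 3 :: 'a mag set) =
           mspan ({act \<sigma> (assoc_b (x 1) (x 2) (x 3)) | \<sigma>. \<sigma> permutes {1,2,3}} \<union>
                  {act \<sigma> (bracket (bracket (x 1) (x 2)) (x 3)) | \<sigma>. \<sigma> permutes {1,2,3}})
    \<and> bracket (bracket (x 2) (x 1)) (x 3) = - bracket (bracket (x 1) (x 2)) (x 3)
    \<and> bracket (bracket (x 1) (x 2)) (x 3) + bracket (bracket (x 3) (x 1)) (x 2)
           + bracket (bracket (x 2) (x 3)) (x 1)
         = assoc_b (x 1) (x 2) (x 3) - assoc_b (x 2) (x 1) (x 3) + assoc_b (x 3) (x 1) (x 2)
           - assoc_b (x 1) (x 3) (x 2) + assoc_b (x 2) (x 3) (x 1) - assoc_b (x 3) (x 2) (x 1)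
    \<and> (\<exists>\<phi> :: 'a mag \<Rightarrow> 'a target. sigma3_iso \<phi>)"
proof -
  have "bracket (bracket (x 2) (x 1)) (x 3) = - bracket (bracket (x 1) (x 2)) (x 3)"
    by (simp add: bracket_swap[of "x 2"] bracket_uminus_left)
  then show ?thesis
    using Prim2_eq dim_Prim3 Prim3_eq_span_generators nonassociative_Jacobi_var
      sigma3_iso_Prim3_coords
    unfolding x_def mdim_def mspan_def orbit_assoc_b_123 orbit_bracket_bracket_123
    by blast
qed

end
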